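(* Let $0<c<1/2$. For every $B\in\mathcal F$ and every integer $m\ge0$, $$g(m,B)\le\frac{2c}{1-c}\,\big|\mathrm{OPT}^m_{\mathrm{large}}(B)\big|,$$ where $$g(m,B)=\sum_{i\in\mathrm{OPT}^m_{\mathrm{large}}(B)}\ \sum_{B'\in\mathrm{Chain}[M(i),B]} c^{\,1+\mathrm{brank}(i,B')}.$$
   Context: Let $U$ be a finite ground set with weight function $w:U\to\mathbb{R}_{\ge0}$ taking pairwise distinct values. Let $\mathcal F$ be a laminar family of subsets of $U$ (for any $A,B\in\mathcal F$: $A\subseteq B$, $B\subseteq A$, or $A\cap B=\emptyset$) with $U\in\mathcal F$; each $A\in\mathcal F$ has a positive integer capacity $\mu(A)$, with $\mu(A)<\mu(B)$ whenever $A\subsetneq B$. A set $X\subseteq U$ is independent iff $|X\cap A|\le\mu(A)$ for all $A\in\mathcal F$. For $i\in U$, $M(i)$ denotes the minimal member of $\mathcal F$ containing $i$. For $A\subseteq B$ in $\mathcal F$, $\mathrm{Chain}[A,B]$ is the sequence of all $B'\in\mathcal F$ with $A\subseteq B'\subseteq B$, ordered by inclusion from $A$ up to $B$. For $B\in\mathcal F$, $\mathrm{OPT}(B)$ is the maximum-weight independent subset of $B$, and $\mathrm{OPT}^m_{\mathrm{large}}(B)$ is the set of the $m$ largest-weight elements of $\mathrm{OPT}(B)$ (all of $\mathrm{OPT}(B)$ if it has fewer than $m$ elements). The backward rank $\mathrm{brank}(i,B)$ is the number of elements of $\mathrm{OPT}(B)$ of weight less than $w(i)$. Standing convention of the paper: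 by padding $U$ with dummy elements of infinitesimal weight, one assumes $|\mathrm{OPT}(B)|=\mu(B)$ for every $B\in\mathcal F$. *)

theory Defs
  imports Main Complex_Main
begin

definition laminar :: "'a set set \<Rightarrow> bool" where
  "laminar F \<longleftrightarrow> (\<forall>A\<in>F. \<forall>B\<in>F. A \<subseteq> B \<or> B \<subseteq> A \<or> A \<inter> B = {})"

definition indep :: "'a set set \<Rightarrow> ('a set \<Rightarrow> nat) \<Rightarrow> 'a set \<Rightarrow> bool" where
  "indep F mu X \<longleftrightarrow> (\<forall>A\<in>F. card (X \<inter> A) \<le> mu A)"

definition is_opt :: "'a set set \<Rightarrow> ('a set \<Rightarrow> nat) \<Rightarrow> ('a \<Rightarrow> real) \<Rightarrow> 'a set \<Rightarrow> 'a set \<Rightarrow> bool" where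
  "is_opt F mu w B X \<longleftrightarrow> X \<subseteq> B \<and> indep F mu X \<and>
     (\<forall>Y. Y \<subseteq> B \<and> indep F mu Y \<longrightarrow> sum w Y \<le> sum w X)"

definition OPT :: "'a set set \<Rightarrow> ('a set \<Rightarrow> nat) \<Rightarrow> ('a \<Rightarrow> real) \<Rightarrow> 'a set \<Rightarrow> 'a set" where
  "OPT F mu w B = (THE X. is_opt F mu w B X)"

text \<open>The m largest-weight elements of OPT(B) (all of OPT(B) if it has fewer than m elements).\<close>
definition OPT_large :: "'a set set \<Rightarrow> ('a set \<Rightarrow> nat) \<Rightarrow> ('a \<Rightarrow> real) \<Rightarrow> nat \<Rightarrow> 'a set \<Rightarrow> 'a set" where
  "OPT_large F mu w m B = {i \<in> OPT F mu w B. card {j \<in> OPT F mu w B. w j > w i} < m}"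

definition brank :: "'a set set \<Rightarrow> ('a set \<Rightarrow> nat) \<Rightarrow> ('a \<Rightarrow> real) \<Rightarrow> 'a \<Rightarrow> 'a set \<Rightarrow> nat" where
  "brank F mu w i B = card {j \<in> OPT F mu w B. w j < w i}"

definition Mmin :: "'a set set \<Rightarrow> 'a \<Rightarrow> 'a set" where
  "Mmin F i = (THE A. A \<in> F \<and> i \<in> A \<and> (\<forall>A'\<in>F. i \<in> A' \<longrightarrow> A \<subseteq> A'))"

text \<open>Members of Chain[A,B] (as a set; the order is irrelevant for summation).\<close>
definition Chain :: "'a set set \<Rightarrow> 'a set \<Rightarrow> 'a set \<Rightarrow> 'a set set" where
  "Chain F A B = {B' \<in> F. A \<subseteq> B' \<and> B' \<subseteq> B}"

definition gfun :: "'a set set \<Rightarrow> ('a set \<Rightarrow> nat) \<Rightarrow> ('a \<Rightarrow> real) \<Rightarrow> real \<Rightarrow> nat \<Rightarrow> 'a set \<Rightarrow> real" where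
  "gfun F mu w c m B = (\<Sum>i\<in>OPT_large F mu w m B. \<Sum>B'\<in>Chain F (Mmin F i) B.
       c ^ (1 + brank F mu w i B'))"

end

theory Submission
  imports Defs
begin

text \<open>
  OPT(B) is characterised by the greedy rule: an element of B belongs to OPT(B) iff it is
  independent together with the heavier elements of OPT(B). Comparing the greedy rules of B and
  of a member D \<subseteq> B of the family shows that OPT(B) \<inter> D \<subseteq> OPT(D), and that every element of
  OPT(D) heavier than some element of OPT(B) \<inter> D lies in OPT(B). Hence for S = OPT_large(B)
  the set S \<inter> D consists of the |S \<inter> D| heaviest elements of OPT(D); their backward ranks are
  mu(D) - |S \<inter> D|, ..., mu(D) - 1, and after exchanging the two sums g(m, B) becomes
  c / (1 - c) times the sum over all members D \<subseteq> B of c^(mu(D) - |S \<inter> D|) - c^mu(D).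
  This sum over the laminar tree below B is at most 2|S|. It is proved by induction over the
  tree with the stronger bound 2(1 - c)s - (1 - c^s)(1 + c^(mu(B) - s + 1)), s = |S \<inter> B|:
  the correction terms of the children merge into one, and because mu(D) < mu(B) for a child D
  they carry an extra factor c that pays for the root term.
\<close>

section \<open>Elementary inequalities\<close>

lemma one_minus_power_le:
  fixes c :: real
  assumes "0 \<le> c"
  shows "1 - c ^ d \<le> (1 - c) * real d"
  using Bernoulli_inequality[of "c - 1" d] assms by (simp add: algebra_simps)

lemma mult_merge_le:
  fixes a b e :: real
  assumes "a \<le> 1" "b \<le> 1" "0 \<le> e" "e \<le> 1"
  shows "(1 - a * b) * (1 + e) \<le> (1 - a) * (1 + e * b) + (1 - b) * (1 + e * a)"
proof -
  have "(1 - a) * (1 + e * b) + (1 - b) * (1 + e * a) - (1 - a * b) * (1 + e)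
      = (1 - a) * (1 - b) * (1 - e)"
    by (simp add: algebra_simps)
  moreover have "0 \<le> (1 - a) * (1 - b) * (1 - e)"
    using assms by simp
  ultimately show ?thesis by linarith
qed

lemma sum_merge_le:
  fixes c :: real and t :: "'b \<Rightarrow> nat"
  assumes "finite C" "0 \<le> c" "c \<le> 1" "sum t C \<le> n"
  shows "(1 - c ^ sum t C) * (1 + c ^ (n - sum t C)) \<le> (\<Sum>D\<in>C. (1 - c ^ t D) * (1 + c ^ (n - t D)))"
  using assms(1,4)
proof (induction C rule: finite_induct)
  case empty
  then show ?case by simp
next
  case (insert D C)
  define a where "a = c ^ t D"
  define b where "b = c ^ sum t C"
  define e where "e = c ^ (n - t D - sum t C)"
  have sum_insert: "sum t (insert D C) = t D + sum t C"
    using insert by simp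
  have "c ^ (n - t D) = e * b"
    using insert.prems by (simp add: e_def b_def sum_insert flip: power_add)
  moreover have "c ^ (n - sum t C) = e * a"
    using insert.prems by (simp add: e_def a_def sum_insert flip: power_add)
  moreover have "c ^ sum t (insert D C) = a * b"
    by (simp add: a_def b_def sum_insert power_add)
  moreover have "n - sum t (insert D C) = n - t D - sum t C"
    by (simp add: sum_insert)
  ultimately have "(1 - c ^ sum t (insert D C)) * (1 + c ^ (n - sum t (insert D C)))
      = (1 - a * b) * (1 + e)"
    by (simp add: e_def)
  also have "\<dots> \<le> (1 - a) * (1 + e * b) + (1 - b) * (1 + e * a)"
    using assms by (intro mult_merge_le) (simp_all add: a_def b_def e_def power_le_one)
  also have "\<dots> \<le> (1 - c ^ t D) * (1 + c ^ (n - t D))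
      + (\<Sum>D\<in>C. (1 - c ^ t D) * (1 + c ^ (n - t D)))"
    using insert \<open>c ^ (n - t D) = e * b\<close> \<open>c ^ (n - sum t C) = e * a\<close>
    by (simp add: a_def b_def sum_insert)
  finally show ?case
    using insert by simp
qed

lemma one_minus_mult_sum_power:
  fixes c :: real
  assumes "a \<le> b"
  shows "(1 - c) * (\<Sum>k\<in>{a..<b}. c ^ Suc k) = c * (c ^ a - c ^ b)"
  using assms
proof (induction b rule: dec_induct)
  case (step n)
  have "(1 - c) * (\<Sum>k\<in>{a..<Suc n}. c ^ Suc k)
      = (1 - c) * (\<Sum>k\<in>{a..<n}. c ^ Suc k) + (1 - c) * c ^ Suc n"
    using step(1) by (simp add: sum.atLeastLessThan_Suc algebra_simps)
  also have "\<dots> = c * (c ^ a - c ^ Suc n)"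
    using step by (simp add: algebra_simps)
  finally show ?case .
qed simp

text \<open>The root step of the induction in laminar_top_ranks_weight_le: X is the total weight
  below the children, sg their share of S, s the share of the root and n its capacity.\<close>

lemma laminar_root_step_le:
  fixes c X :: real
  assumes c: "0 < c" "c < 1" and "sg \<le> s" "s \<le> n"
    and X: "(1 - c) * X \<le> 2 * (1 - c) * sg - (1 - c ^ sg) * (1 + c ^ (n - sg))"
  shows "(1 - c) * ((c ^ (n - s) - c ^ n) + X) \<le> 2 * (1 - c) * s - (1 - c ^ s) * (1 + c ^ (n - s + 1))"
proof -
  define a where "a = c ^ sg"
  define b where "b = c ^ (s - sg)"
  define y where "y = c ^ (n - s)"
  have "a \<le> 1" "b \<le> 1" "y \<le> 1"
    using c by (simp_all add: a_def b_def y_def power_le_one)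
  have ab: "c ^ s = a * b"
    using \<open>sg \<le> s\<close> by (simp add: a_def b_def flip: power_add)
  have "c ^ (n - sg) = y * b"
    using assms by (simp add: y_def b_def flip: power_add)
  then have X': "(1 - c) * X \<le> 2 * (1 - c) * sg - (1 - a) * (1 + y * b)"
    using X by (simp add: a_def)
  have "c ^ n = y * c ^ s"
    using \<open>s \<le> n\<close> by (simp add: y_def flip: power_add)
  then have root: "c ^ (n - s) - c ^ n = y - y * (a * b)"
    by (simp add: y_def ab)
  have "(1 - c) * ((c ^ (n - s) - c ^ n) + X)
      = ((1 - a * b) * (1 + y) - (1 - a * b) * (1 + y * c)) + (1 - c) * X"
    unfolding root by algebra
  also have "\<dots> \<le> ((1 - a * b) * (1 + y) - (1 - a * b) * (1 + y * c))
      + (2 * (1 - c) * sg - (1 - a) * (1 + y * b))"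
    using X' by linarith
  also have "\<dots> = (1 - b) * (a + y) + 2 * (1 - c) * sg - (1 - a * b) * (1 + y * c)"
    by algebra
  also have "\<dots> \<le> 2 * ((1 - c) * real (s - sg)) + 2 * (1 - c) * sg - (1 - a * b) * (1 + y * c)"
  proof -
    have "(1 - b) * (a + y) \<le> (1 - b) * 2"
      using \<open>a \<le> 1\<close> \<open>b \<le> 1\<close> \<open>y \<le> 1\<close> by (intro mult_left_mono) auto
    also have "\<dots> \<le> 2 * ((1 - c) * real (s - sg))"
      using one_minus_power_le[of c "s - sg"] c by (simp add: b_def)
    finally show ?thesis by linarith
  qed
  also have "\<dots> = 2 * (1 - c) * s - (1 - c ^ s) * (1 + c ^ (n - s + 1))"
    using \<open>sg \<le> s\<close> by (simp add: ab y_def of_nat_diff algebra_simps)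
  finally show ?thesis .
qed

lemma laminar_child_step_le:
  fixes c W :: real
  assumes c: "0 < c" "c < 1" and "s \<le> m" "m < n"
    and W: "(1 - c) * W \<le> 2 * (1 - c) * s - (1 - c ^ s) * (1 + c ^ (m - s + 1))"
  shows "(1 - c) * W \<le> 2 * (1 - c) * s - (1 - c ^ s) * (1 + c ^ (n - s))"
proof -
  have "c ^ (n - s) \<le> c ^ (m - s + 1)"
    using assms by (intro power_decreasing) auto
  moreover have "0 \<le> 1 - c ^ s"
    using c by (simp add: power_le_one)
  ultimately have "(1 - c ^ s) * (1 + c ^ (n - s)) \<le> (1 - c ^ s) * (1 + c ^ (m - s + 1))"
    by (intro mult_left_mono) auto
  with W show ?thesis
    by linarith
qed

lemma sum_UN_le:
  fixes f :: "'b \<Rightarrow> real"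
  assumes "finite I" "\<forall>i\<in>I. finite (A i)" "\<forall>x\<in>(\<Union>i\<in>I. A i). 0 \<le> f x"
  shows "sum f (\<Union>i\<in>I. A i) \<le> (\<Sum>i\<in>I. sum f (A i))"
  using assms
proof (induction I rule: finite_induct)
  case (insert i I)
  have "sum f (A i \<union> (\<Union>j\<in>I. A j)) + sum f (A i \<inter> (\<Union>j\<in>I. A j))
      = sum f (A i) + sum f (\<Union>j\<in>I. A j)"
    using insert by (intro sum.union_inter) auto
  moreover have "0 \<le> sum f (A i \<inter> (\<Union>j\<in>I. A j))"
    using insert.prems by (intro sum_nonneg) auto
  ultimately show ?case
    using insert by simp
qed simp

section \<open>Laminar families\<close>

lemma laminar_nested:
  assumes "laminar F" "A \<in> F" "D \<in> F" "z \<in> A" "z \<in> D"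
  shows "A \<subseteq> D \<or> D \<subset> A"
  using assms unfolding laminar_def by blast

lemma Chain_Mmin:
  assumes "laminar F" "finite F" "U \<in> F" "i \<in> U"
  shows "Chain F (Mmin F i) B = {D \<in> F. D \<subseteq> B \<and> i \<in> D}"
proof -
  obtain A0 where "A0 \<in> F" "i \<in> A0" and min: "\<forall>A\<in>{A \<in> F. i \<in> A}. A \<subseteq> A0 \<longrightarrow> A0 = A"
    using finite_has_minimal[of "{A \<in> F. i \<in> A}"] assms(2-4) by auto
  have least: "A0 \<subseteq> A" if "A \<in> F" "i \<in> A" for A
    using laminar_nested[OF assms(1) that(1) \<open>A0 \<in> F\<close> that(2) \<open>i \<in> A0\<close>] min that by blast
  have "Mmin F i = A0"
    unfolding Mmin_def
  proof (rule the_equality)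
    show "A0 \<in> F \<and> i \<in> A0 \<and> (\<forall>A\<in>F. i \<in> A \<longrightarrow> A0 \<subseteq> A)"
      using \<open>A0 \<in> F\<close> \<open>i \<in> A0\<close> least by blast
  qed (use \<open>A0 \<in> F\<close> \<open>i \<in> A0\<close> least in blast)
  then show ?thesis
    unfolding Chain_def using \<open>i \<in> A0\<close> least by blast
qed

definition children :: "'a set set \<Rightarrow> 'a set \<Rightarrow> 'a set set" where
  "children F B = {C \<in> F. C \<subset> B \<and> (\<forall>D\<in>F. C \<subset> D \<longrightarrow> \<not> D \<subset> B)}"

lemma children_subset: "children F B \<subseteq> F"
  unfolding children_def by (rule Collect_restrict)

lemma children_psubset: "C \<in> children F B \<Longrightarrow> C \<subset> B"
  by (simp add: children_def)

lemma subset_children: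
  assumes "finite F" "D \<in> F" "D \<subset> B"
  shows "\<exists>C\<in>children F B. D \<subseteq> C"
proof -
  obtain C where "C \<in> {C \<in> F. C \<subset> B}" "D \<subseteq> C" and max: "\<forall>C'\<in>{C \<in> F. C \<subset> B}. C \<subseteq> C' \<longrightarrow> C = C'"
    using finite_has_maximal2[of "{C \<in> F. C \<subset> B}" D] assms by auto
  then have "C \<in> children F B"
    unfolding children_def by blast
  with \<open>D \<subseteq> C\<close> show ?thesis by blast
qed

lemma children_disjoint:
  assumes "laminar F" "C \<in> children F B" "C' \<in> children F B" "C \<noteq> C'"
  shows "C \<inter> C' = {}"
proof -
  have "C \<in> F" "C' \<in> F" "C' \<subset> B" "C \<subset> B"
    and "\<forall>D\<in>F. C \<subset> D \<longrightarrow> \<not> D \<subset> B" "\<forall>D\<in>F. C' \<subset> D \<longrightarrow> \<not> D \<subset> B"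
    using assms(2,3) by (auto simp: children_def)
  then have "\<not> C \<subset> C'" "\<not> C' \<subset> C"
    by blast+
  moreover have "C \<subseteq> C' \<or> C' \<subseteq> C \<or> C \<inter> C' = {}"
    using assms(1) \<open>C \<in> F\<close> \<open>C' \<in> F\<close> unfolding laminar_def by blast
  ultimately show ?thesis
    using assms(4) by blast
qed

lemma sum_card_children_le:
  assumes "laminar F" "finite F" "finite B"
  shows "(\<Sum>C\<in>children F B. card (S \<inter> C)) \<le> card (S \<inter> B)"
proof -
  have sub: "\<forall>C\<in>children F B. C \<subseteq> B"
    using children_psubset by auto
  have fin: "finite (children F B)"
    using children_subset assms(2) by (rule finite_subset)
  have fin': "\<forall>C\<in>children F B. finite (S \<inter> C)"
    using sub assms(3) by (meson finite_Int rev_finite_subset)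
  have disj: "\<forall>C\<in>children F B. \<forall>C'\<in>children F B. C \<noteq> C' \<longrightarrow> (S \<inter> C) \<inter> (S \<inter> C') = {}"
    using children_disjoint[OF assms(1)] by blast
  have "(\<Sum>C\<in>children F B. card (S \<inter> C)) = card (\<Union>C\<in>children F B. S \<inter> C)"
    using card_UN_disjoint[OF fin fin' disj] by simp
  also have "\<dots> \<le> card (S \<inter> B)"
    using assms(3) sub by (intro card_mono) auto
  finally show ?thesis .
qed

lemma sum_subtree_le_children:
  fixes f :: "'a set \<Rightarrow> real"
  assumes "finite F" "B \<in> F" "\<forall>D\<in>F. 0 \<le> f D"
  shows "sum f {D \<in> F. D \<subseteq> B} \<le> f B + (\<Sum>C\<in>children F B. sum f {D \<in> F. D \<subseteq> C})"
proof -
  have fin: "finite (children F B)"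
    using children_subset assms(1) by (rule finite_subset)
  have "{D \<in> F. D \<subseteq> B} = insert B {D \<in> F. D \<subset> B}"
    using assms(2) by auto
  then have "sum f {D \<in> F. D \<subseteq> B} = f B + sum f {D \<in> F. D \<subset> B}"
    using assms(1) by simp
  moreover have "{D \<in> F. D \<subset> B} \<subseteq> (\<Union>C\<in>children F B. {D \<in> F. D \<subseteq> C})"
  proof
    fix D
    assume D: "D \<in> {D \<in> F. D \<subset> B}"
    then obtain C where "C \<in> children F B" "D \<subseteq> C"
      using subset_children[OF assms(1)] by blast
    with D show "D \<in> (\<Union>C\<in>children F B. {D \<in> F. D \<subseteq> C})"
      by blast
  qed
  then have "sum f {D \<in> F. D \<subset> B} \<le> sum f (\<Union>C\<in>children F B. {D \<in> F. D \<subseteq> C})"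
    using assms fin by (intro sum_mono2) auto
  also have "\<dots> \<le> (\<Sum>C\<in>children F B. sum f {D \<in> F. D \<subseteq> C})"
    using assms fin by (intro sum_UN_le) auto
  ultimately show ?thesis
    by linarith
qed

text \<open>By lemma one_minus_mult_sum_power, c * top_ranks_weight c mu S D is (1 - c) times the sum of
  c^(r + 1) over the top card (S \<inter> D) ranks r < mu D.\<close>

definition top_ranks_weight :: "real \<Rightarrow> ('a set \<Rightarrow> nat) \<Rightarrow> 'a set \<Rightarrow> 'a set \<Rightarrow> real" where
  "top_ranks_weight c mu S D = c ^ (mu D - card (S \<inter> D)) - c ^ mu D"

lemma top_ranks_weight_nonneg:
  fixes c :: real
  assumes "0 \<le> c" "c \<le> 1"
  shows "0 \<le> top_ranks_weight c mu S D"
  using assms by (simp add: top_ranks_weight_def power_decreasing)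

lemma laminar_top_ranks_weight_le:
  fixes c :: real and mu :: "'a set \<Rightarrow> nat"
  assumes "finite F" "\<forall>A\<in>F. finite A" "laminar F"
    and mu_mono: "\<forall>A\<in>F. \<forall>A'\<in>F. A \<subset> A' \<longrightarrow> mu A < mu A'"
    and S: "\<forall>A\<in>F. card (S \<inter> A) \<le> mu A"
    and c: "0 < c" "c < 1"
    and "B \<in> F"
  shows "(1 - c) * (\<Sum>D\<in>{D \<in> F. D \<subseteq> B}. top_ranks_weight c mu S D)
    \<le> 2 * (1 - c) * card (S \<inter> B) - (1 - c ^ card (S \<inter> B)) * (1 + c ^ (mu B - card (S \<inter> B) + 1))"
  using \<open>B \<in> F\<close>
proof (induction "card B" arbitrary: B rule: less_induct)
  case less
  define s where "s D = card (S \<inter> D)" for D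
  define W where "W D = (\<Sum>D'\<in>{D' \<in> F. D' \<subseteq> D}. top_ranks_weight c mu S D')" for D
  define Ch where "Ch = children F B"
  define sg where "sg = (\<Sum>C\<in>Ch. s C)"
  have "finite B" "finite Ch"
    using assms less.prems children_subset[of F B] by (auto simp: Ch_def intro: finite_subset)
  have "sg \<le> s B"
    using sum_card_children_le assms \<open>finite B\<close> by (simp add: sg_def s_def Ch_def)
  have "s B \<le> mu B"
    using S less.prems by (simp add: s_def)
  have child: "(1 - c) * W C \<le> 2 * (1 - c) * s C - (1 - c ^ s C) * (1 + c ^ (mu B - s C))"
    if "C \<in> Ch" for C
  proof (rule laminar_child_step_le[OF c])
    have "C \<in> F" "C \<subset> B"
      using that children_subset[of F B] children_psubset[of C F B] by (auto simp: Ch_def)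
    then show "s C \<le> mu C" "mu C < mu B"
      using mu_mono S less.prems by (auto simp: s_def)
    from \<open>C \<subset> B\<close> have "card C < card B"
      using \<open>finite B\<close> by (simp add: psubset_card_mono)
    with \<open>C \<in> F\<close> show "(1 - c) * W C \<le> 2 * (1 - c) * s C - (1 - c ^ s C) * (1 + c ^ (mu C - s C + 1))"
      using less.hyps by (simp add: W_def s_def)
  qed
  have "(1 - c) * (\<Sum>C\<in>Ch. W C) \<le> (\<Sum>C\<in>Ch. 2 * (1 - c) * s C - (1 - c ^ s C) * (1 + c ^ (mu B - s C)))"
    unfolding sum_distrib_left using child by (intro sum_mono) auto
  also have "\<dots> \<le> 2 * (1 - c) * sg - (1 - c ^ sg) * (1 + c ^ (mu B - sg))"
    using sum_merge_le[OF \<open>finite Ch\<close>, of c s "mu B"] c \<open>sg \<le> s B\<close> \<open>s B \<le> mu B\<close>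
    by (simp add: sg_def sum_subtractf sum_distrib_left)
  finally have children_le:
    "(1 - c) * (\<Sum>C\<in>Ch. W C) \<le> 2 * (1 - c) * sg - (1 - c ^ sg) * (1 + c ^ (mu B - sg))" .
  have "W B \<le> top_ranks_weight c mu S B + (\<Sum>C\<in>Ch. W C)"
    using sum_subtree_le_children[OF assms(1) less.prems] top_ranks_weight_nonneg[of c mu S] c
    by (simp add: W_def Ch_def)
  then have "(1 - c) * W B \<le> (1 - c) * ((c ^ (mu B - s B) - c ^ mu B) + (\<Sum>C\<in>Ch. W C))"
    using c by (intro mult_left_mono) (simp_all add: top_ranks_weight_def s_def)
  also have "\<dots> \<le> 2 * (1 - c) * s B - (1 - c ^ s B) * (1 + c ^ (mu B - s B + 1))"
    by (rule laminar_root_step_le[OF c \<open>sg \<le> s B\<close> \<open>s B \<le> mu B\<close> children_le])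
  finally show ?case
    by (simp add: W_def s_def)
qed

lemma laminar_sum_top_ranks_weight_le:
  fixes c :: real and mu :: "'a set \<Rightarrow> nat"
  assumes "finite F" "\<forall>A\<in>F. finite A" "laminar F"
    and "\<forall>A\<in>F. \<forall>A'\<in>F. A \<subset> A' \<longrightarrow> mu A < mu A'"
    and "\<forall>A\<in>F. card (S \<inter> A) \<le> mu A"
    and c: "0 < c" "c < 1"
    and "B \<in> F"
  shows "(\<Sum>D\<in>{D \<in> F. D \<subseteq> B}. top_ranks_weight c mu S D) \<le> 2 * card (S \<inter> B)"
proof -
  have "0 \<le> (1 - c ^ card (S \<inter> B)) * (1 + c ^ (mu B - card (S \<inter> B) + 1))"
    using c by (simp add: power_le_one)
  then have "(1 - c) * (\<Sum>D\<in>{D \<in> F. D \<subseteq> B}. top_ranks_weight c mu S D) \<le> (1 - c) * (2 * card (S \<inter> B))"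
    using laminar_top_ranks_weight_le[OF assms] by (simp only: mult.assoc)
  with c show ?thesis
    by simp
qed

section \<open>Independent sets and the greedy rule\<close>

lemma indep_subset:
  assumes "indep F mu X" "Y \<subseteq> X" "finite X"
  shows "indep F mu Y"
  using assms unfolding indep_def by (meson Int_mono card_mono finite_Int order_refl order_trans)

lemma dependent_insertE:
  assumes "\<not> indep F mu (insert z H)" "indep F mu Y" "H \<subseteq> Y" "finite Y"
  obtains A where "A \<in> F" "z \<in> A" "mu A < card (insert z H \<inter> A)"
proof -
  obtain A where A: "A \<in> F" "mu A < card (insert z H \<inter> A)"
    using assms(1) by (auto simp: indep_def not_le)
  have "z \<in> A"
  proof (rule ccontr)
    assume "z \<notin> A"
    then have "card (insert z H \<inter> A) \<le> card (Y \<inter> A)"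
      using assms(3,4) by (intro card_mono) auto
    with A assms(2) show False
      unfolding indep_def by fastforce
  qed
  with A that show ?thesis by blast
qed

lemma indep_exchange:
  assumes "laminar F" "finite X" "indep F mu X" "x \<notin> X"
    and "A0 \<in> F" "x \<in> A0" "y \<in> X" "y \<in> A0"
    and slack: "\<forall>A\<in>F. x \<in> A \<longrightarrow> A \<subset> A0 \<longrightarrow> card (X \<inter> A) < mu A"
  shows "indep F mu (insert x (X - {y}))"
  unfolding indep_def
proof
  fix A
  assume "A \<in> F"
  have X_A: "card (X \<inter> A) \<le> mu A"
    using assms(3) \<open>A \<in> F\<close> by (simp add: indep_def)
  consider "x \<notin> A" | "x \<in> A" "y \<in> A" | "x \<in> A" "y \<notin> A"
    by blast
  then show "card (insert x (X - {y}) \<inter> A) \<le> mu A"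
  proof cases
    case 1
    then have "card (insert x (X - {y}) \<inter> A) \<le> card (X \<inter> A)"
      using assms(2) by (intro card_mono) auto
    with X_A show ?thesis by linarith
  next
    case 2
    then have "insert x (X - {y}) \<inter> A = insert x ((X \<inter> A) - {y})"
      by auto
    moreover have "card ((X \<inter> A) - {y}) = card (X \<inter> A) - 1" "0 < card (X \<inter> A)"
      using 2 assms(2,7) by (auto simp: card_gt_0_iff)
    moreover have "x \<notin> (X \<inter> A) - {y}"
      using assms(4) by blast
    ultimately show ?thesis
      using X_A assms(2) by simp
  next
    case 3
    then have "A \<subset> A0"
      using assms(1,5,6,8) \<open>A \<in> F\<close> unfolding laminar_def by blast
    then have "card (X \<inter> A) < mu A"
      using slack \<open>A \<in> F\<close> 3 by blast
    moreover have "card (insert x (X - {y}) \<inter> A) \<le> card (insert x (X \<inter> A))"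
      using assms(2) by (intro card_mono) auto
    moreover have "card (insert x (X \<inter> A)) \<le> Suc (card (X \<inter> A))"
      using assms(2) by (simp add: card_insert_if)
    ultimately show ?thesis by linarith
  qed
qed

lemma obtain_minimal_tight:
  assumes "finite F" "A \<in> F" "x \<in> A" "card (X \<inter> A) = mu A" "indep F mu X"
  obtains A0 where "A0 \<in> F" "x \<in> A0" "card (X \<inter> A0) = mu A0"
    "\<forall>A\<in>F. x \<in> A \<longrightarrow> A \<subset> A0 \<longrightarrow> card (X \<inter> A) < mu A"
proof -
  define T where "T = {A \<in> F. x \<in> A \<and> card (X \<inter> A) = mu A}"
  have "finite T" "T \<noteq> {}"
    using assms unfolding T_def by auto
  then obtain A0 where "A0 \<in> T" and min: "\<forall>A\<in>T. A \<subseteq> A0 \<longrightarrow> A0 = A"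
    using finite_has_minimal by blast
  have "card (X \<inter> A) < mu A" if "A \<in> F" "x \<in> A" "A \<subset> A0" for A
  proof -
    have "A \<notin> T"
      using min that(3) by blast
    then have "card (X \<inter> A) \<noteq> mu A"
      using that(1,2) unfolding T_def by blast
    moreover have "card (X \<inter> A) \<le> mu A"
      using assms(5) that(1) by (simp add: indep_def)
    ultimately show ?thesis by simp
  qed
  with \<open>A0 \<in> T\<close> that show ?thesis
    unfolding T_def by blast
qed

definition greedy :: "'a set set \<Rightarrow> ('a set \<Rightarrow> nat) \<Rightarrow> ('a \<Rightarrow> real) \<Rightarrow> 'a set \<Rightarrow> 'a set \<Rightarrow> bool" where
  "greedy F mu w B X \<longleftrightarrow> X \<subseteq> B \<and> (\<forall>x\<in>B. x \<in> X \<longleftrightarrow> indep F mu (insert x {y \<in> X. w x < w y}))"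

lemma greedy_subset: "greedy F mu w B X \<Longrightarrow> X \<subseteq> B"
  by (simp add: greedy_def)

lemma greedy_memD:
  "greedy F mu w B X \<Longrightarrow> x \<in> B \<Longrightarrow> x \<in> X \<longleftrightarrow> indep F mu (insert x {y \<in> X. w x < w y})"
  by (simp add: greedy_def)

lemma greedy_unique:
  assumes "finite B" "greedy F mu w B X" "greedy F mu w B Y"
  shows "X = Y"
proof (rule ccontr)
  define Ds where "Ds = (X - Y) \<union> (Y - X)"
  assume "X \<noteq> Y"
  then have "Ds \<noteq> {}"
    unfolding Ds_def by blast
  have "Ds \<subseteq> B"
    using greedy_subset[OF assms(2)] greedy_subset[OF assms(3)] unfolding Ds_def by blast
  then have "finite Ds"
    using assms(1) by (rule finite_subset)
  have "Max (w ` Ds) \<in> w ` Ds"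
    using \<open>finite Ds\<close> \<open>Ds \<noteq> {}\<close> by (intro Max_in) auto
  then obtain z where "z \<in> Ds" "w z = Max (w ` Ds)"
    by (metis imageE)
  then have z_max: "w u \<le> w z" if "u \<in> Ds" for u
    using \<open>finite Ds\<close> that by simp
  have "y \<in> X \<longleftrightarrow> y \<in> Y" if "w z < w y" for y
    using z_max[of y] that unfolding Ds_def by auto
  then have "{y \<in> X. w z < w y} = {y \<in> Y. w z < w y}"
    by blast
  moreover have "z \<in> B"
    using \<open>z \<in> Ds\<close> \<open>Ds \<subseteq> B\<close> by blast
  ultimately have "z \<in> X \<longleftrightarrow> z \<in> Y"
    using greedy_memD[OF assms(2)] greedy_memD[OF assms(3)] by simp
  with \<open>z \<in> Ds\<close> show False
    unfolding Ds_def by blast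
qed

lemma heavier_parts_eq:
  fixes w :: "'a \<Rightarrow> real"
  assumes "Y \<subseteq> D" "x0 \<in> X \<inter> D" "w x0 \<le> w z"
    and "\<forall>u\<in>X \<inter> D. w z < w u \<longrightarrow> u \<in> Y"
    and "\<forall>u\<in>Y - X. w z < w u \<longrightarrow> \<not> (\<exists>x\<in>X \<inter> D. w x < w u)"
  shows "{u \<in> X. w z < w u} \<inter> D = {u \<in> Y. w z < w u}"
proof -
  have "u \<in> X" if "u \<in> Y" "w z < w u" for u
  proof (rule ccontr)
    assume "u \<notin> X"
    moreover have "w x0 < w u"
      using assms(3) that(2) by linarith
    ultimately show False
      using assms(2,5) that by blast
  qed
  with assms(1,4) show ?thesis
    by blast
qed

section \<open>Backward ranks in an upper set\<close>

definition upper_set :: "('a \<Rightarrow> real) \<Rightarrow> 'a set \<Rightarrow> 'a set \<Rightarrow> bool" where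
  "upper_set w X S \<longleftrightarrow> S \<subseteq> X \<and> (\<forall>i\<in>S. \<forall>j\<in>X. w i < w j \<longrightarrow> j \<in> S)"

definition rank_in :: "('a \<Rightarrow> real) \<Rightarrow> 'a set \<Rightarrow> 'a \<Rightarrow> nat" where
  "rank_in w X i = card {j \<in> X. w j < w i}"

lemma rank_in_less:
  assumes "finite X" "i \<in> X" "j \<in> X" "w i < w j"
  shows "rank_in w X i < rank_in w X j"
  unfolding rank_in_def using assms by (intro psubset_card_mono) auto

lemma rank_in_less_card:
  assumes "finite X" "i \<in> X"
  shows "rank_in w X i < card X"
  unfolding rank_in_def using assms by (intro psubset_card_mono) auto

lemma inj_on_rank_in:
  assumes "finite X" "inj_on w X"
  shows "inj_on (rank_in w X) X"
proof (rule inj_onI)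
  fix i j
  assume "i \<in> X" "j \<in> X" "rank_in w X i = rank_in w X j"
  show "i = j"
  proof (rule ccontr)
    assume "i \<noteq> j"
    then have "w i \<noteq> w j"
      using assms(2) \<open>i \<in> X\<close> \<open>j \<in> X\<close> unfolding inj_on_def by blast
    then show False
      using rank_in_less[OF assms(1) \<open>i \<in> X\<close> \<open>j \<in> X\<close>, of w] rank_in_less[OF assms(1) \<open>j \<in> X\<close> \<open>i \<in> X\<close>, of w]
        \<open>rank_in w X i = rank_in w X j\<close> by linarith
  qed
qed

lemma card_le_rank_in_upper_set:
  assumes "finite X" "inj_on w X" "upper_set w X S" "i \<in> S"
  shows "card X \<le> rank_in w X i + card S"
proof -
  have "S \<subseteq> X" and upper: "\<forall>i\<in>S. \<forall>j\<in>X. w i < w j \<longrightarrow> j \<in> S"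
    using assms(3) by (auto simp: upper_set_def)
  have "X \<subseteq> {j \<in> X. w j < w i} \<union> S"
  proof
    fix j
    assume "j \<in> X"
    have "w j < w i \<or> j = i \<or> w i < w j"
      using assms(2,4) \<open>S \<subseteq> X\<close> \<open>j \<in> X\<close> unfolding inj_on_def by (meson linorder_neqE subsetD)
    then show "j \<in> {j \<in> X. w j < w i} \<union> S"
      using upper assms(4) \<open>j \<in> X\<close> by blast
  qed
  then have "card X \<le> card ({j \<in> X. w j < w i} \<union> S)"
    using assms(1) \<open>S \<subseteq> X\<close> by (intro card_mono) (auto intro: rev_finite_subset)
  also have "\<dots> \<le> rank_in w X i + card S"
    unfolding rank_in_def by (rule card_Un_le)
  finally show ?thesis .
qed

lemma rank_in_image_upper_set:
  assumes "finite X" "inj_on w X" "upper_set w X S"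
  shows "rank_in w X ` S = {card X - card S..<card X}"
proof (rule card_subset_eq)
  have "S \<subseteq> X"
    using assms(3) by (simp add: upper_set_def)
  show "rank_in w X ` S \<subseteq> {card X - card S..<card X}"
    using rank_in_less_card[OF assms(1)] card_le_rank_in_upper_set[OF assms] \<open>S \<subseteq> X\<close>
    by fastforce
  have "inj_on (rank_in w X) S"
    using inj_on_rank_in[OF assms(1,2)] \<open>S \<subseteq> X\<close> by (rule inj_on_subset)
  moreover have "card S \<le> card X"
    using assms(1) \<open>S \<subseteq> X\<close> by (rule card_mono)
  ultimately show "card (rank_in w X ` S) = card {card X - card S..<card X}"
    by (simp add: card_image)
qed simp

lemma sum_power_rank_in_upper_set:
  fixes c :: real
  assumes "finite X" "inj_on w X" "upper_set w X S"
  shows "(1 - c) * (\<Sum>i\<in>S. c ^ Suc (rank_in w X i)) = c * (c ^ (card X - card S) - c ^ card X)"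
proof -
  have "S \<subseteq> X"
    using assms(3) by (simp add: upper_set_def)
  then have "inj_on (rank_in w X) S"
    using inj_on_rank_in[OF assms(1,2)] by (rule_tac inj_on_subset)
  then have "(\<Sum>i\<in>S. c ^ Suc (rank_in w X i)) = (\<Sum>k\<in>rank_in w X ` S. c ^ Suc k)"
    by (simp add: sum.reindex)
  also have "\<dots> = (\<Sum>k\<in>{card X - card S..<card X}. c ^ Suc k)"
    by (simp add: rank_in_image_upper_set[OF assms])
  finally show ?thesis
    using one_minus_mult_sum_power[of "card X - card S" "card X" c] by simp
qed

section \<open>Optimal sets of a laminar matroid\<close>

locale laminar_matroid =
  fixes U :: "'a set" and w :: "'a \<Rightarrow> real" and F :: "'a set set" and mu :: "'a set \<Rightarrow> nat"
  assumes finite_U: "finite U"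
    and weight_nonneg: "\<forall>i\<in>U. 0 \<le> w i"
    and inj_weight: "inj_on w U"
    and F_Pow: "F \<subseteq> Pow U"
    and laminar: "laminar F"
    and mu_mono: "\<forall>A\<in>F. \<forall>A'\<in>F. A \<subset> A' \<longrightarrow> mu A < mu A'"
    and card_is_opt: "\<forall>B\<in>F. \<forall>X. is_opt F mu w B X \<longrightarrow> card X = mu B"
    \<comment> \<open>the padding convention: optimal sets are saturated\<close>
begin

lemma finite_F: "finite F"
  using F_Pow finite_U by (meson finite_Pow_iff finite_subset)

lemma member_subset_U: "A \<in> F \<Longrightarrow> A \<subseteq> U"
  using F_Pow by blast

lemma finite_member: "A \<in> F \<Longrightarrow> finite A"
  using member_subset_U finite_U by (rule finite_subset)

lemma is_opt_exists:
  assumes "B \<in> F"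
  shows "\<exists>X. is_opt F mu w B X"
proof -
  define C where "C = {Y. Y \<subseteq> B \<and> indep F mu Y}"
  have "finite C"
    using finite_member[OF assms] unfolding C_def by simp
  moreover have "{} \<in> C"
    unfolding C_def indep_def by simp
  ultimately have "Max (sum w ` C) \<in> sum w ` C"
    by (intro Max_in) auto
  then obtain X where "X \<in> C" "sum w X = Max (sum w ` C)"
    by (metis imageE)
  with \<open>finite C\<close> have "is_opt F mu w B X"
    unfolding is_opt_def C_def by simp
  then show ?thesis ..
qed

lemma is_opt_insert_dependent:
  assumes "B \<in> F" "is_opt F mu w B X" "x \<in> B" "x \<notin> X"
  shows "\<not> indep F mu (insert x X)"
proof
  assume indep: "indep F mu (insert x X)"
  have "finite X"
    using assms(1,2) finite_member rev_finite_subset unfolding is_opt_def by blast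
  have "0 \<le> w x"
    using weight_nonneg member_subset_U[OF assms(1)] assms(3) by blast
  then have "sum w X \<le> sum w (insert x X)"
    using \<open>finite X\<close> assms(4) by simp
  with indep assms(2,3) have "is_opt F mu w B (insert x X)"
    unfolding is_opt_def by (meson dual_order.trans insert_subset)
  then have "card (insert x X) = card X"
    using card_is_opt assms(1,2) by simp
  with \<open>finite X\<close> assms(4) show False
    by simp
qed

lemma is_opt_obtain_minimal_tight:
  assumes "B \<in> F" "is_opt F mu w B X" "x \<in> B" "x \<notin> X"
  obtains A0 where "A0 \<in> F" "x \<in> A0" "card (X \<inter> A0) = mu A0"
    "\<forall>A\<in>F. x \<in> A \<longrightarrow> A \<subset> A0 \<longrightarrow> card (X \<inter> A) < mu A"
proof -
  have "indep F mu X" "finite X"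
    using assms(1,2) finite_member rev_finite_subset unfolding is_opt_def by blast+
  obtain A where "A \<in> F" "x \<in> A" "mu A < card (insert x X \<inter> A)"
    by (rule dependent_insertE[OF is_opt_insert_dependent[OF assms]
          \<open>indep F mu X\<close> order_refl \<open>finite X\<close>])
  moreover have "card (insert x X \<inter> A) = Suc (card (X \<inter> A))"
    using \<open>x \<in> A\<close> \<open>x \<notin> X\<close> \<open>finite X\<close> by simp
  moreover have "card (X \<inter> A) \<le> mu A"
    using \<open>indep F mu X\<close> \<open>A \<in> F\<close> by (simp add: indep_def)
  ultimately have "card (X \<inter> A) = mu A"
    by linarith
  with obtain_minimal_tight[OF finite_F \<open>A \<in> F\<close> \<open>x \<in> A\<close> _ \<open>indep F mu X\<close>] that show ?thesis
    by blast
qed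

lemma is_opt_greedy_mem:
  assumes "B \<in> F" "is_opt F mu w B X" "x \<in> B"
    and indep_H: "indep F mu (insert x {y \<in> X. w x < w y})"
  shows "x \<in> X"
proof (rule ccontr)
  define H where "H = {y \<in> X. w x < w y}"
  assume "x \<notin> X"
  have "X \<subseteq> B" "indep F mu X" "finite X"
    and max: "\<forall>Y. Y \<subseteq> B \<and> indep F mu Y \<longrightarrow> sum w Y \<le> sum w X"
    using assms(1,2) finite_member rev_finite_subset unfolding is_opt_def by blast+
  obtain A0 where "A0 \<in> F" "x \<in> A0" "card (X \<inter> A0) = mu A0"
    and slack: "\<forall>A\<in>F. x \<in> A \<longrightarrow> A \<subset> A0 \<longrightarrow> card (X \<inter> A) < mu A"
    by (rule is_opt_obtain_minimal_tight[OF assms(1-3) \<open>x \<notin> X\<close>])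
  have "Suc (card (H \<inter> A0)) = card (insert x H \<inter> A0)"
    using \<open>x \<in> A0\<close> \<open>x \<notin> X\<close> \<open>finite X\<close> by (simp add: H_def)
  also have "\<dots> \<le> mu A0"
    using indep_H \<open>A0 \<in> F\<close> by (simp add: H_def indep_def)
  finally have "\<not> X \<inter> A0 \<subseteq> H \<inter> A0"
    using \<open>card (X \<inter> A0) = mu A0\<close> card_mono[of "H \<inter> A0" "X \<inter> A0"] \<open>finite X\<close>
    by (auto simp: H_def)
  then obtain y where "y \<in> X" "y \<in> A0" "\<not> w x < w y"
    unfolding H_def by blast
  moreover have "w y \<noteq> w x"
    using inj_weight member_subset_U[OF assms(1)] \<open>x \<in> B\<close> \<open>X \<subseteq> B\<close> \<open>y \<in> X\<close> \<open>x \<notin> X\<close>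
    unfolding inj_on_def by blast
  ultimately have "w y < w x"
    by simp
  have "indep F mu (insert x (X - {y}))"
    by (rule indep_exchange[OF laminar \<open>finite X\<close> \<open>indep F mu X\<close> \<open>x \<notin> X\<close> \<open>A0 \<in> F\<close>
          \<open>x \<in> A0\<close> \<open>y \<in> X\<close> \<open>y \<in> A0\<close> slack])
  moreover have "insert x (X - {y}) \<subseteq> B"
    using \<open>x \<in> B\<close> \<open>X \<subseteq> B\<close> by blast
  ultimately have "sum w (insert x (X - {y})) \<le> sum w X"
    using max by blast
  moreover have "sum w (insert x (X - {y})) = w x + sum w X - w y"
    using \<open>finite X\<close> \<open>x \<notin> X\<close> \<open>y \<in> X\<close> by (simp add: sum_diff1)
  ultimately show False
    using \<open>w y < w x\<close> by simp
qed

lemma is_opt_greedy: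
  assumes "B \<in> F" "is_opt F mu w B X"
  shows "greedy F mu w B X"
proof -
  have "X \<subseteq> B" "indep F mu X" "finite X"
    using assms finite_member rev_finite_subset unfolding is_opt_def by blast+
  then have "indep F mu (insert x {y \<in> X. w x < w y})" if "x \<in> X" for x
    using that by (intro indep_subset[OF \<open>indep F mu X\<close> _ \<open>finite X\<close>]) auto
  then show ?thesis
    unfolding greedy_def using \<open>X \<subseteq> B\<close> is_opt_greedy_mem[OF assms] by blast
qed

lemma is_opt_OPT:
  assumes "B \<in> F"
  shows "is_opt F mu w B (OPT F mu w B)"
proof -
  obtain X where X: "is_opt F mu w B X"
    using is_opt_exists[OF assms] by blast
  have "Y = X" if "is_opt F mu w B Y" for Y
    using greedy_unique[OF finite_member[OF assms]] is_opt_greedy[OF assms] that X by blast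
  with X have "\<exists>!X. is_opt F mu w B X"
    by blast
  then show ?thesis
    unfolding OPT_def by (rule theI')
qed

lemma OPT_subset: "B \<in> F \<Longrightarrow> OPT F mu w B \<subseteq> B"
  using is_opt_OPT by (simp add: is_opt_def)

lemma indep_OPT: "B \<in> F \<Longrightarrow> indep F mu (OPT F mu w B)"
  using is_opt_OPT by (simp add: is_opt_def)

lemma card_OPT: "B \<in> F \<Longrightarrow> card (OPT F mu w B) = mu B"
  using is_opt_OPT card_is_opt by blast

lemma greedy_OPT: "B \<in> F \<Longrightarrow> greedy F mu w B (OPT F mu w B)"
  using is_opt_OPT by (simp add: is_opt_greedy)

lemma finite_OPT: "B \<in> F \<Longrightarrow> finite (OPT F mu w B)"
  using OPT_subset finite_member by (rule finite_subset)

lemma OPT_restrict_mem: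
  assumes "B \<in> F" "D \<in> F" "D \<subseteq> B" "z \<in> OPT F mu w B" "z \<in> D"
    and agree: "{u \<in> OPT F mu w B. w z < w u} \<inter> D = {u \<in> OPT F mu w D. w z < w u}"
  shows "z \<in> OPT F mu w D"
proof (rule ccontr)
  define H where "H = {u \<in> OPT F mu w D. w z < w u}"
  assume "z \<notin> OPT F mu w D"
  then have "\<not> indep F mu (insert z H)"
    using greedy_memD[OF greedy_OPT[OF assms(2)] \<open>z \<in> D\<close>] by (simp add: H_def)
  then obtain A where "A \<in> F" "z \<in> A" and A: "mu A < card (insert z H \<inter> A)"
    by (rule dependent_insertE[OF _ indep_OPT[OF assms(2)] _ finite_OPT[OF assms(2)]]) (auto simp: H_def)
  from laminar_nested[OF laminar this(1) assms(2) this(2) assms(5)]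
  show False
  proof
    assume "A \<subseteq> D"
    then have "insert z H \<inter> A = insert z {u \<in> OPT F mu w B. w z < w u} \<inter> A"
      using agree unfolding H_def by blast
    moreover have "indep F mu (insert z {u \<in> OPT F mu w B. w z < w u})"
      using greedy_memD[OF greedy_OPT[OF assms(1)]] assms(3-5) by blast
    ultimately have "card (insert z H \<inter> A) \<le> mu A"
      using \<open>A \<in> F\<close> by (simp add: indep_def)
    with A show False
      by simp
  next
    assume "D \<subset> A"
    have "finite H"
      using finite_OPT[OF assms(2)] by (simp add: H_def)
    then have "card (insert z H \<inter> A) \<le> card (insert z H)"
      by (intro card_mono) auto
    also have "\<dots> \<le> Suc (card H)"
      using \<open>finite H\<close> by (simp add: card_insert_if)
    moreover have "card H \<le> mu D"
      using finite_OPT[OF assms(2)] card_OPT[OF assms(2)] card_mono[of "OPT F mu w D" H]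
      by (simp add: H_def)
    moreover have "mu D < mu A"
      using mu_mono \<open>D \<subset> A\<close> \<open>A \<in> F\<close> assms(2) by blast
    ultimately show False
      using A by simp
  qed
qed

lemma OPT_extend_mem:
  assumes "B \<in> F" "D \<in> F" "D \<subseteq> B" "z \<in> OPT F mu w D"
    and "x \<in> OPT F mu w B" "x \<in> D" "w x < w z"
    and agree: "{u \<in> OPT F mu w B. w z < w u} \<inter> D = {u \<in> OPT F mu w D. w z < w u}"
  shows "z \<in> OPT F mu w B"
proof (rule ccontr)
  define H where "H = {u \<in> OPT F mu w B. w z < w u}"
  have "z \<in> D"
    using OPT_subset[OF assms(2)] assms(4) by blast
  assume "z \<notin> OPT F mu w B"
  then have "\<not> indep F mu (insert z H)"
    using greedy_memD[OF greedy_OPT[OF assms(1)]] \<open>z \<in> D\<close> assms(3) by (auto simp: H_def)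
  then obtain A where "A \<in> F" "z \<in> A" and A: "mu A < card (insert z H \<inter> A)"
    by (rule dependent_insertE[OF _ indep_OPT[OF assms(1)] _ finite_OPT[OF assms(1)]]) (auto simp: H_def)
  from laminar_nested[OF laminar this(1) assms(2) this(2) \<open>z \<in> D\<close>]
  show False
  proof
    assume "A \<subseteq> D"
    then have "insert z H \<inter> A = insert z {u \<in> OPT F mu w D. w z < w u} \<inter> A"
      using agree unfolding H_def by blast
    moreover have "indep F mu (insert z {u \<in> OPT F mu w D. w z < w u})"
      using greedy_memD[OF greedy_OPT[OF assms(2)]] \<open>z \<in> D\<close> assms(4) by blast
    ultimately have "card (insert z H \<inter> A) \<le> mu A"
      using \<open>A \<in> F\<close> by (simp add: indep_def)
    with A show False
      by simp
  next
    assume "D \<subset> A"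
    then have "x \<in> A"
      using assms(6) by blast
    have "finite H" "x \<notin> H" "z \<notin> H"
      using finite_OPT[OF assms(1)] assms(7) by (auto simp: H_def)
    then have "card (insert z H \<inter> A) = card (insert x (H \<inter> A))"
      using \<open>z \<in> A\<close> by (simp add: insert_absorb)
    also have "\<dots> \<le> card (insert x {u \<in> OPT F mu w B. w x < w u} \<inter> A)"
      using finite_OPT[OF assms(1)] \<open>x \<in> A\<close> assms(7) by (intro card_mono) (auto simp: H_def)
    also have "\<dots> \<le> mu A"
      using greedy_memD[OF greedy_OPT[OF assms(1)]] assms(3,5,6) \<open>A \<in> F\<close>
      by (simp add: indep_def subset_iff)
    finally show False
      using A by simp
  qed
qed

text \<open>A heaviest element of either difference set has the same heavier elements in both optimal
  sets, so the greedy rules of B and D decide it alike.\<close>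

lemma OPT_nested:
  assumes "B \<in> F" "D \<in> F" "D \<subseteq> B"
  shows "OPT F mu w B \<inter> D \<subseteq> OPT F mu w D"
    and "\<And>x y. x \<in> OPT F mu w B \<inter> D \<Longrightarrow> y \<in> OPT F mu w D \<Longrightarrow> w x < w y \<Longrightarrow> y \<in> OPT F mu w B"
proof -
  define X where "X = OPT F mu w B"
  define Y where "Y = OPT F mu w D"
  define S1 where "S1 = (X \<inter> D) - Y"
  define S2 where "S2 = {y \<in> Y - X. \<exists>x\<in>X \<inter> D. w x < w y}"
  have "S1 \<union> S2 = {}"
  proof (rule ccontr)
    assume "S1 \<union> S2 \<noteq> {}"
    moreover have "finite (S1 \<union> S2)"
      using finite_OPT assms(1,2) unfolding S1_def S2_def X_def Y_def by auto
    ultimately have "Max (w ` (S1 \<union> S2)) \<in> w ` (S1 \<union> S2)"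
      by (intro Max_in) auto
    then obtain z where z: "z \<in> S1 \<union> S2" "w z = Max (w ` (S1 \<union> S2))"
      by (metis imageE)
    with \<open>finite (S1 \<union> S2)\<close> have z_max: "w u \<le> w z" if "u \<in> S1 \<union> S2" for u
      using that by simp
    have "z \<in> D"
      using z(1) OPT_subset[OF assms(2)] unfolding S1_def S2_def Y_def by blast
    obtain x0 where "x0 \<in> X \<inter> D" "w x0 \<le> w z"
      using z(1) unfolding S1_def S2_def by force
    have "Y \<subseteq> D"
      using OPT_subset[OF assms(2)] by (simp add: Y_def)
    moreover have "\<forall>u\<in>X \<inter> D. w z < w u \<longrightarrow> u \<in> Y"
      using z_max unfolding S1_def by force
    moreover have "\<forall>u\<in>Y - X. w z < w u \<longrightarrow> \<not> (\<exists>x\<in>X \<inter> D. w x < w u)"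
      using z_max unfolding S2_def by force
    ultimately have agree: "{u \<in> X. w z < w u} \<inter> D = {u \<in> Y. w z < w u}"
      using \<open>x0 \<in> X \<inter> D\<close> \<open>w x0 \<le> w z\<close> by (intro heavier_parts_eq)
    show False
    proof (cases "z \<in> S1")
      case True
      then show False
        using OPT_restrict_mem[OF assms _ \<open>z \<in> D\<close>] agree unfolding S1_def X_def Y_def by blast
    next
      case False
      with z(1) obtain x where "z \<in> Y" "z \<notin> X" "x \<in> X \<inter> D" "w x < w z"
        unfolding S2_def by blast
      then show False
        using OPT_extend_mem[OF assms] agree unfolding X_def Y_def by blast
    qed
  qed
  then show "OPT F mu w B \<inter> D \<subseteq> OPT F mu w D"
    and "\<And>x y. x \<in> OPT F mu w B \<inter> D \<Longrightarrow> y \<in> OPT F mu w D \<Longrightarrow> w x < w y \<Longrightarrow> y \<in> OPT F mu w B"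
    unfolding S1_def S2_def X_def Y_def by blast+
qed

lemma upper_set_OPT_large:
  assumes "B \<in> F"
  shows "upper_set w (OPT F mu w B) (OPT_large F mu w m B)"
  unfolding upper_set_def
proof (intro conjI ballI impI)
  fix i j
  assume i: "i \<in> OPT_large F mu w m B" and "j \<in> OPT F mu w B" "w i < w j"
  then have "card {y \<in> OPT F mu w B. w j < w y} \<le> card {y \<in> OPT F mu w B. w i < w y}"
    using finite_OPT[OF assms] by (intro card_mono) auto
  with i \<open>j \<in> OPT F mu w B\<close> show "j \<in> OPT_large F mu w m B"
    unfolding OPT_large_def by simp
qed (auto simp: OPT_large_def)

lemma upper_set_OPT_restrict:
  assumes "B \<in> F" "D \<in> F" "D \<subseteq> B" "upper_set w (OPT F mu w B) S"
  shows "upper_set w (OPT F mu w D) (S \<inter> D)"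
proof -
  have "S \<subseteq> OPT F mu w B" and upper: "\<forall>i\<in>S. \<forall>j\<in>OPT F mu w B. w i < w j \<longrightarrow> j \<in> S"
    using assms(4) by (auto simp: upper_set_def)
  moreover have "j \<in> S \<inter> D" if "i \<in> S \<inter> D" "j \<in> OPT F mu w D" "w i < w j" for i j
    using OPT_nested(2)[OF assms(1-3)] upper OPT_subset[OF assms(2)] \<open>S \<subseteq> OPT F mu w B\<close> that
    by blast
  ultimately show ?thesis
    using OPT_nested(1)[OF assms(1-3)] unfolding upper_set_def by blast
qed

lemma sum_power_brank:
  fixes c :: real
  assumes "B \<in> F" "D \<in> F" "D \<subseteq> B" "upper_set w (OPT F mu w B) S"
  shows "(1 - c) * (\<Sum>i\<in>S \<inter> D. c ^ (1 + brank F mu w i D)) = c * top_ranks_weight c mu S D"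
proof -
  have "inj_on w (OPT F mu w D)"
    by (rule inj_on_subset[OF inj_weight]) (use OPT_subset[OF assms(2)] member_subset_U[OF assms(2)] in blast)
  then show ?thesis
    using sum_power_rank_in_upper_set[OF finite_OPT[OF assms(2)] _ upper_set_OPT_restrict[OF assms], of c]
    by (simp add: brank_def rank_in_def card_OPT[OF assms(2)] top_ranks_weight_def)
qed

lemma gfun_eq_sum_top_ranks_weight:
  fixes c :: real
  assumes "U \<in> F" "B \<in> F" "c < 1"
  shows "gfun F mu w c m B = c / (1 - c) * (\<Sum>D\<in>{D \<in> F. D \<subseteq> B}. top_ranks_weight c mu (OPT_large F mu w m B) D)"
proof -
  define S where "S = OPT_large F mu w m B"
  have "upper_set w (OPT F mu w B) S"
    unfolding S_def by (rule upper_set_OPT_large[OF assms(2)])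
  then have "S \<subseteq> U"
    using OPT_subset[OF assms(2)] member_subset_U[OF assms(2)] by (auto simp: upper_set_def)
  then have "finite S"
    using finite_U by (rule finite_subset)
  have "gfun F mu w c m B = (\<Sum>i\<in>S. \<Sum>D\<in>{D \<in> {D \<in> F. D \<subseteq> B}. i \<in> D}. c ^ (1 + brank F mu w i D))"
    unfolding gfun_def S_def[symmetric]
    using Chain_Mmin[OF laminar finite_F assms(1)] \<open>S \<subseteq> U\<close> by (intro sum.cong) auto
  also have "\<dots> = (\<Sum>D\<in>{D \<in> F. D \<subseteq> B}. \<Sum>i\<in>{i \<in> S. i \<in> D}. c ^ (1 + brank F mu w i D))"
    using \<open>finite S\<close> finite_F by (intro sum.swap_restrict) auto
  also have "\<dots> = (\<Sum>D\<in>{D \<in> F. D \<subseteq> B}. c / (1 - c) * top_ranks_weight c mu S D)"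
  proof (rule sum.cong)
    fix D
    assume "D \<in> {D \<in> F. D \<subseteq> B}"
    then have "(1 - c) * (\<Sum>i\<in>S \<inter> D. c ^ (1 + brank F mu w i D)) = c * top_ranks_weight c mu S D"
      using sum_power_brank[OF assms(2) _ _ \<open>upper_set w (OPT F mu w B) S\<close>] by blast
    with assms(3) show "(\<Sum>i\<in>{i \<in> S. i \<in> D}. c ^ (1 + brank F mu w i D)) = c / (1 - c) * top_ranks_weight c mu S D"
      by (simp add: Int_def field_simps)
  qed simp
  finally show ?thesis
    by (simp add: S_def sum_distrib_left)
qed

lemma sum_top_ranks_weight_OPT_large_le:
  fixes c :: real
  assumes "B \<in> F" "0 < c" "c < 1"
  shows "(\<Sum>D\<in>{D \<in> F. D \<subseteq> B}. top_ranks_weight c mu (OPT_large F mu w m B) D)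
    \<le> 2 * card (OPT_large F mu w m B)"
proof -
  define S where "S = OPT_large F mu w m B"
  have "S \<subseteq> OPT F mu w B"
    using upper_set_OPT_large[OF assms(1)] by (simp add: S_def upper_set_def)
  then have "indep F mu S"
    using indep_OPT[OF assms(1)] finite_OPT[OF assms(1)] by (simp add: indep_subset)
  then have "\<forall>A\<in>F. card (S \<inter> A) \<le> mu A"
    by (simp add: indep_def)
  from laminar_sum_top_ranks_weight_le[OF finite_F _ laminar mu_mono this assms(2,3,1)]
  have "(\<Sum>D\<in>{D \<in> F. D \<subseteq> B}. top_ranks_weight c mu S D) \<le> 2 * card (S \<inter> B)"
    using finite_member by blast
  moreover have "S \<inter> B = S"
    using \<open>S \<subseteq> OPT F mu w B\<close> OPT_subset[OF assms(1)] by blast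
  ultimately show ?thesis
    by (simp add: S_def)
qed

end

theorem lemma3:
  fixes U :: "'a set" and w :: "'a \<Rightarrow> real" and F :: "'a set set"
    and mu :: "'a set \<Rightarrow> nat" and c :: real and m :: nat and B :: "'a set"
  assumes "finite U"
    and "\<forall>i\<in>U. w i \<ge> 0"
    and "inj_on w U"
    and "F \<subseteq> Pow U" and "laminar F" and "U \<in> F"
    and "\<forall>A\<in>F. mu A > 0"
    and "\<forall>A\<in>F. \<forall>A'\<in>F. A \<subset> A' \<longrightarrow> mu A < mu A'"
    and "\<forall>B'\<in>F. \<forall>X. is_opt F mu w B' X \<longrightarrow> card X = mu B'"
    and "0 < c" and "c < 1/2"
    and "B \<in> F"
  shows "gfun F mu w c m B \<le> 2 * c / (1 - c) * real (card (OPT_large F mu w m B))"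
proof -
  interpret laminar_matroid U w F mu
    using assms by unfold_locales auto
  have c: "0 < c" "c < 1"
    using assms(10,11) by auto
  have "gfun F mu w c m B
      = c / (1 - c) * (\<Sum>D\<in>{D \<in> F. D \<subseteq> B}. top_ranks_weight c mu (OPT_large F mu w m B) D)"
    by (rule gfun_eq_sum_top_ranks_weight[OF \<open>U \<in> F\<close> \<open>B \<in> F\<close> \<open>c < 1\<close>])
  also have "\<dots> \<le> c / (1 - c) * (2 * card (OPT_large F mu w m B))"
    using c sum_top_ranks_weight_OPT_large_le[OF \<open>B \<in> F\<close> c] by (intro mult_left_mono) auto
  also have "\<dots> = 2 * c / (1 - c) * real (card (OPT_large F mu w m B))"
    by simp
  finally show ?thesis .
qed

end
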